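(* Let $m^*$ be the exact model of the environment and let $m\in\mathcal{M}$ be any model. Fix a base policy $\pi^b$, and let $\pi_m^r$ be the rollout policy and $\pi_m^{ce}$ the certainty-equivalence policy obtained from $\pi^b$ in $m$. Suppose $m$ is a performance-resembling model (PRM) of $m^*$ with respect to $\Pi=\{\pi_m^r,\pi_m^{ce}\}$ and $J$. Then $J_{m^*}^{\pi_m^{ce}}\ge J_{m^*}^{\pi_m^{r}}$.
   Context: Fix finite sets $\mathcal{S}$ (states) and $\mathcal{A}$ (actions) and a discount factor $\gamma\in[0,1)$. A model is a triple $m=(p,r,d)$ with transition kernel $p:\mathcal{S}\times\mathcal{A}\times\mathcal{S}\to[0,1]$, reward function $r:\mathcal{S}\times\mathcal{A}\times\mathcal{S}\to\mathbb{R}$ and initial state distribution $d$ on $\mathcal{S}$; $\mathcal{M}$ is the set of all such models, and $m^*\in\mathcal{M}$ denotes the exact model of the environment. A policy is a map $\pi:\mathcal{S}\times\mathcal{A}\to[0,1]$ giving a distribution over actions at each state; $\mathbb{\Pi}$ is the set of all policies. For $m=(p,r,d)$ and $\pi\in\mathbb{\Pi}$, the performance is $J_m^\pi=\mathbb{E}_{\pi,p}[\sum_{t=0}^\infty\gamma^t r(S_t,A_t,S_{t+1})\mid S_0\sim d]$. Given a base policy $\pi^b$ and a model $m$, the rollout policy $\pi_m^r$ is the policy obtained by one step of policy iteration on $\pi^b$ in $m$ (policy evaluation of $\pi^b$ in $m$ followed by greedy policy improvement), and the certainty-equivalence policy $\pi_m^{ce}$ is the policy obtained by running policy iteration or value iteration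 to convergence in $m$ starting from $\pi^b$ (an optimal policy of $m$). Given $\Pi\subseteq\mathbb{\Pi}$, a model $m$ is a performance-resembling model (PRM) of $m^*$ w.r.t. $\Pi$ and $J$ if for all $\pi^i,\pi^j\in\Pi$, $J_m^{\pi^i}\ge J_m^{\pi^j}$ implies $J_{m^*}^{\pi^i}\ge J_{m^*}^{\pi^j}$. *)

theory Defs
  imports "HOL-Analysis.Analysis"
begin

type_synonym ('s, 'a) model =
  "('s \<Rightarrow> 'a \<Rightarrow> 's \<Rightarrow> real) \<times> ('s \<Rightarrow> 'a \<Rightarrow> 's \<Rightarrow> real) \<times> ('s \<Rightarrow> real)"

type_synonym ('s, 'a) policy = "'s \<Rightarrow> 'a \<Rightarrow> real"

definition trans_of :: "('s, 'a) model \<Rightarrow> 's \<Rightarrow> 'a \<Rightarrow> 's \<Rightarrow> real" where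
  "trans_of m = fst m"
definition rew_of :: "('s, 'a) model \<Rightarrow> 's \<Rightarrow> 'a \<Rightarrow> 's \<Rightarrow> real" where
  "rew_of m = fst (snd m)"
definition init_of :: "('s, 'a) model \<Rightarrow> 's \<Rightarrow> real" where
  "init_of m = snd (snd m)"

definition valid_model :: "('s::finite, 'a::finite) model \<Rightarrow> bool" where
  "valid_model m \<longleftrightarrow>
     (\<forall>s a s'. 0 \<le> trans_of m s a s') \<and> (\<forall>s a. (\<Sum>s'\<in>UNIV. trans_of m s a s') = 1) \<and>
     (\<forall>s. 0 \<le> init_of m s) \<and> (\<Sum>s\<in>UNIV. init_of m s) = 1"

definition is_policy :: "('s::finite, 'a::finite) policy \<Rightarrow> bool" where
  "is_policy \<pi> \<longleftrightarrow> (\<forall>s a. 0 \<le> \<pi> s a) \<and> (\<forall>s. (\<Sum>a\<in>UNIV. \<pi> s a) = 1)"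

primrec state_dist :: "('s::finite \<Rightarrow> 'a::finite \<Rightarrow> 's \<Rightarrow> real) \<Rightarrow> ('s, 'a) policy
    \<Rightarrow> ('s \<Rightarrow> real) \<Rightarrow> nat \<Rightarrow> 's \<Rightarrow> real" where
  "state_dist p \<pi> d 0 = d"
| "state_dist p \<pi> d (Suc t) =
     (\<lambda>s'. \<Sum>s\<in>UNIV. \<Sum>a\<in>UNIV. state_dist p \<pi> d t s * \<pi> s a * p s a s')"

definition perf_from :: "real \<Rightarrow> ('s::finite \<Rightarrow> 'a::finite \<Rightarrow> 's \<Rightarrow> real)
    \<Rightarrow> ('s \<Rightarrow> 'a \<Rightarrow> 's \<Rightarrow> real) \<Rightarrow> ('s \<Rightarrow> real) \<Rightarrow> ('s, 'a) policy \<Rightarrow> real" where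
  "perf_from \<gamma> p r d \<pi> =
     (\<Sum>t. \<gamma> ^ t * (\<Sum>s\<in>UNIV. \<Sum>a\<in>UNIV. \<Sum>s'\<in>UNIV.
        state_dist p \<pi> d t s * \<pi> s a * p s a s' * r s a s'))"

definition J :: "real \<Rightarrow> ('s::finite, 'a::finite) model \<Rightarrow> ('s, 'a) policy \<Rightarrow> real" where
  "J \<gamma> m \<pi> = perf_from \<gamma> (trans_of m) (rew_of m) (init_of m) \<pi>"

definition V :: "real \<Rightarrow> ('s::finite, 'a::finite) model \<Rightarrow> ('s, 'a) policy \<Rightarrow> 's \<Rightarrow> real" where
  "V \<gamma> m \<pi> s = perf_from \<gamma> (trans_of m) (rew_of m) (\<lambda>s0. if s0 = s then 1 else 0) \<pi>"

definition Q :: "real \<Rightarrow> ('s::finite, 'a::finite) model \<Rightarrow> ('s, 'a) policy \<Rightarrow> 's \<Rightarrow> 'a \<Rightarrow> real" where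
  "Q \<gamma> m \<pi> s a = (\<Sum>s'\<in>UNIV. trans_of m s a s' * (rew_of m s a s' + \<gamma> * V \<gamma> m \<pi> s'))"

text \<open>Rollout policy: one step of policy iteration on pi_b in m, i.e. a policy greedy w.r.t.
  Q_m^{pi_b} (only maximizing actions get positive probability; ties broken arbitrarily).\<close>
definition is_rollout_policy :: "real \<Rightarrow> ('s::finite, 'a::finite) model \<Rightarrow> ('s, 'a) policy
    \<Rightarrow> ('s, 'a) policy \<Rightarrow> bool" where
  "is_rollout_policy \<gamma> m \<pi>b \<pi> \<longleftrightarrow> is_policy \<pi> \<and>
     (\<forall>s a. 0 < \<pi> s a \<longrightarrow> (\<forall>a'. Q \<gamma> m \<pi>b s a' \<le> Q \<gamma> m \<pi>b s a))"

text \<open>Certainty-equivalence policy: the converged output of policy/value iteration in m,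
  i.e. an optimal policy of m (maximal value at every state among all policies).\<close>
definition is_ce_policy :: "real \<Rightarrow> ('s::finite, 'a::finite) model \<Rightarrow> ('s, 'a) policy \<Rightarrow> bool" where
  "is_ce_policy \<gamma> m \<pi> \<longleftrightarrow> is_policy \<pi> \<and>
     (\<forall>\<pi>'. is_policy \<pi>' \<longrightarrow> (\<forall>s. V \<gamma> m \<pi>' s \<le> V \<gamma> m \<pi> s))"

definition is_PRM :: "real \<Rightarrow> ('s::finite, 'a::finite) model \<Rightarrow> ('s, 'a) model
    \<Rightarrow> ('s, 'a) policy set \<Rightarrow> bool" where
  "is_PRM \<gamma> m mstar PS \<longleftrightarrow>
     (\<forall>\<pi>i\<in>PS. \<forall>\<pi>j\<in>PS. J \<gamma> m \<pi>i \<ge> J \<gamma> m \<pi>j \<longrightarrow> J \<gamma> mstar \<pi>i \<ge> J \<gamma> mstar \<pi>j)"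

end

theory Submission
  imports Defs
begin

text \<open>The distribution of the state at time t depends linearly on the initial distribution,
  and the discounted reward series converges absolutely (finitely many bounded rewards,
  \<open>\<gamma> < 1\<close>). Hence \<open>J\<^sub>m\<^sup>\<pi>\<close> is the \<open>d\<close>-weighted average of the state values
  \<open>V\<^sub>m\<^sup>\<pi>\<close>. The certainty-equivalence policy is optimal in \<open>m\<close>, so its state values, and
  therefore its performance in \<open>m\<close>, dominate those of the rollout policy; the PRM property
  transfers this order to \<open>m\<^sup>*\<close>.\<close>

definition is_distribution :: "('x::finite \<Rightarrow> real) \<Rightarrow> bool" where
  "is_distribution f \<longleftrightarrow> (\<forall>x. 0 \<le> f x) \<and> (\<Sum>x\<in>UNIV. f x) = 1"

lemma valid_model_iff_distributions:
  "valid_model m \<longleftrightarrow> (\<forall>s a. is_distribution (trans_of m s a)) \<and> is_distribution (init_of m)"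
  unfolding valid_model_def is_distribution_def by blast

lemma is_policy_iff_distributions: "is_policy \<pi> \<longleftrightarrow> (\<forall>s. is_distribution (\<pi> s))"
  unfolding is_policy_def is_distribution_def by blast

lemma is_distribution_le_one:
  assumes "is_distribution f"
  shows "f x \<le> 1"
proof -
  have "f x \<le> (\<Sum>y\<in>UNIV. f y)"
    using assms by (intro member_le_sum) (auto simp: is_distribution_def)
  with assms show ?thesis by (simp add: is_distribution_def)
qed

definition expected_reward :: "('s::finite \<Rightarrow> 'a::finite \<Rightarrow> 's \<Rightarrow> real)
    \<Rightarrow> ('s \<Rightarrow> 'a \<Rightarrow> 's \<Rightarrow> real) \<Rightarrow> ('s, 'a) policy \<Rightarrow> ('s \<Rightarrow> real) \<Rightarrow> real" where
  "expected_reward p r \<pi> D = (\<Sum>s\<in>UNIV. \<Sum>a\<in>UNIV. \<Sum>s'\<in>UNIV. D s * \<pi> s a * p s a s' * r s a s')"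

lemma perf_from_eq_suminf_expected_reward:
  "perf_from \<gamma> p r d \<pi> = (\<Sum>t. \<gamma> ^ t * expected_reward p r \<pi> (state_dist p \<pi> d t))"
  unfolding perf_from_def expected_reward_def ..

lemma expected_reward_sum:
  "expected_reward p r \<pi> (\<lambda>s. \<Sum>i\<in>I. D i s) = (\<Sum>i\<in>I. expected_reward p r \<pi> (D i))"
proof -
  have "expected_reward p r \<pi> (\<lambda>s. \<Sum>i\<in>I. D i s) =
      (\<Sum>s\<in>UNIV. \<Sum>a\<in>UNIV. \<Sum>s'\<in>UNIV. \<Sum>i\<in>I. D i s * \<pi> s a * p s a s' * r s a s')"
    unfolding expected_reward_def by (simp add: sum_distrib_right)
  also have "\<dots> = (\<Sum>i\<in>I. expected_reward p r \<pi> (D i))"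
    unfolding expected_reward_def sum.swap[of _ I] sum.swap[of _ I UNIV] ..
  finally show ?thesis .
qed

lemma expected_reward_scale:
  "expected_reward p r \<pi> (\<lambda>s. c * D s) = c * expected_reward p r \<pi> D"
  unfolding expected_reward_def by (simp add: sum_distrib_left mult_ac)

lemma state_dist_linear:
  "state_dist p \<pi> (\<lambda>s. \<Sum>i\<in>I. c i * d i s) t = (\<lambda>s. \<Sum>i\<in>I. c i * state_dist p \<pi> (d i) t s)"
proof (induction t)
  case 0
  show ?case by simp
next
  case (Suc t)
  show ?case
  proof
    fix s'
    have "state_dist p \<pi> (\<lambda>s. \<Sum>i\<in>I. c i * d i s) (Suc t) s' =
        (\<Sum>s\<in>UNIV. \<Sum>a\<in>UNIV. \<Sum>i\<in>I. c i * (state_dist p \<pi> (d i) t s * \<pi> s a * p s a s'))"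
      by (simp add: Suc sum_distrib_left sum_distrib_right mult_ac)
    also have "\<dots> = (\<Sum>i\<in>I. c i * state_dist p \<pi> (d i) (Suc t) s')"
      unfolding sum.swap[of _ I] sum.swap[of _ I UNIV] by (simp add: sum_distrib_left)
    finally show "state_dist p \<pi> (\<lambda>s. \<Sum>i\<in>I. c i * d i s) (Suc t) s' =
        (\<Sum>i\<in>I. c i * state_dist p \<pi> (d i) (Suc t) s')" .
  qed
qed

lemma state_dist_eq_sum_point_masses:
  "state_dist p \<pi> d t = (\<lambda>s. \<Sum>s0\<in>UNIV. d s0 * state_dist p \<pi> (\<lambda>x. if x = s0 then 1 else 0) t s)"
proof -
  have "state_dist p \<pi> d t = state_dist p \<pi> (\<lambda>s. \<Sum>s0\<in>UNIV. d s0 * (if s = s0 then 1 else 0)) t"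
    by (simp add: if_distrib cong: if_cong)
  also have "\<dots> = (\<lambda>s. \<Sum>s0\<in>UNIV. d s0 * state_dist p \<pi> (\<lambda>x. if x = s0 then 1 else 0) t s)"
    by (rule state_dist_linear)
  finally show ?thesis .
qed

lemma state_dist_distribution:
  assumes "\<And>s a. is_distribution (p s a)" and "is_policy \<pi>" and "is_distribution d"
  shows "is_distribution (state_dist p \<pi> d t)"
proof (induction t)
  case 0
  show ?case using assms(3) by simp
next
  case (Suc t)
  have p: "\<And>s a s'. 0 \<le> p s a s'" "\<And>s a. (\<Sum>s'\<in>UNIV. p s a s') = 1"
    and \<pi>: "\<And>s a. 0 \<le> \<pi> s a" "\<And>s. (\<Sum>a\<in>UNIV. \<pi> s a) = 1"
    and D: "\<And>s. 0 \<le> state_dist p \<pi> d t s" "(\<Sum>s\<in>UNIV. state_dist p \<pi> d t s) = 1"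
    using assms(1,2) Suc by (auto simp: is_distribution_def is_policy_def)
  have "(\<Sum>s'\<in>UNIV. state_dist p \<pi> d (Suc t) s') =
      (\<Sum>s'\<in>UNIV. \<Sum>s\<in>UNIV. \<Sum>a\<in>UNIV. state_dist p \<pi> d t s * \<pi> s a * p s a s')"
    by simp
  also have "\<dots> = (\<Sum>s\<in>UNIV. \<Sum>a\<in>UNIV. \<Sum>s'\<in>UNIV. state_dist p \<pi> d t s * \<pi> s a * p s a s')"
    by (subst sum.swap) (rule sum.cong[OF refl], rule sum.swap)
  also have "\<dots> = (\<Sum>s\<in>UNIV. state_dist p \<pi> d t s * (\<Sum>a\<in>UNIV. \<pi> s a))"
    by (simp add: p flip: sum_distrib_left)
  also have "\<dots> = 1"
    by (simp add: \<pi> D)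
  finally have "(\<Sum>s'\<in>UNIV. state_dist p \<pi> d (Suc t) s') = 1" .
  moreover have "0 \<le> state_dist p \<pi> d (Suc t) s'" for s'
    unfolding state_dist.simps using p \<pi> D by (intro sum_nonneg mult_nonneg_nonneg)
  ultimately show ?case
    by (simp add: is_distribution_def)
qed

lemma abs_expected_reward_le:
  assumes "\<And>s a. is_distribution (p s a)" and "is_policy \<pi>" and "is_distribution D"
  shows "\<bar>expected_reward p r \<pi> D\<bar> \<le> (\<Sum>s\<in>UNIV. \<Sum>a\<in>UNIV. \<Sum>s'\<in>UNIV. \<bar>r s a s'\<bar>)"
proof -
  have weight_bounds: "0 \<le> D s * \<pi> s a * p s a s' \<and> D s * \<pi> s a * p s a s' \<le> 1" for s a s'
  proof -
    have dists: "is_distribution D" "is_distribution (\<pi> s)" "is_distribution (p s a)"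
      using assms by (auto simp: is_policy_iff_distributions)
    then have "D s \<le> 1" "\<pi> s a \<le> 1" "p s a s' \<le> 1"
      by (auto intro: is_distribution_le_one)
    with dists show ?thesis
      by (auto simp: is_distribution_def intro!: mult_le_one)
  qed
  have "\<bar>expected_reward p r \<pi> D\<bar> \<le>
      (\<Sum>s\<in>UNIV. \<Sum>a\<in>UNIV. \<Sum>s'\<in>UNIV. \<bar>D s * \<pi> s a * p s a s' * r s a s'\<bar>)"
    unfolding expected_reward_def
    by (rule order_trans[OF sum_abs], intro sum_mono, rule order_trans[OF sum_abs],
        intro sum_mono, rule sum_abs)
  also have "\<dots> \<le> (\<Sum>s\<in>UNIV. \<Sum>a\<in>UNIV. \<Sum>s'\<in>UNIV. \<bar>r s a s'\<bar>)"
    using weight_bounds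
    by (intro sum_mono) (metis abs_ge_zero abs_mult abs_of_nonneg mult_left_le_one_le)
  finally show ?thesis .
qed

lemma summable_discounted_expected_reward:
  assumes "\<And>s a. is_distribution (p s a)" and "is_policy \<pi>" and "is_distribution d"
    and "0 \<le> \<gamma>" and "\<gamma> < 1"
  shows "summable (\<lambda>t. \<gamma> ^ t * expected_reward p r \<pi> (state_dist p \<pi> d t))"
proof (rule summable_comparison_test')
  define C where "C = (\<Sum>s\<in>UNIV. \<Sum>a\<in>UNIV. \<Sum>s'\<in>UNIV. \<bar>r s a s'\<bar>)"
  show "summable (\<lambda>t. \<gamma> ^ t * C)"
    using assms(4,5) by (intro summable_mult2 summable_geometric) auto
  fix t
  have "\<bar>expected_reward p r \<pi> (state_dist p \<pi> d t)\<bar> \<le> C"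
    unfolding C_def using assms(1-3) by (intro abs_expected_reward_le state_dist_distribution)
  then show "norm (\<gamma> ^ t * expected_reward p r \<pi> (state_dist p \<pi> d t)) \<le> \<gamma> ^ t * C"
    using assms(4) by (simp add: abs_mult mult_left_mono)
qed

lemma perf_from_eq_sum_point_masses:
  fixes p :: "'s::finite \<Rightarrow> 'a::finite \<Rightarrow> 's \<Rightarrow> real"
  assumes "\<And>s a. is_distribution (p s a)" and "is_policy \<pi>" and "0 \<le> \<gamma>" and "\<gamma> < 1"
  shows "perf_from \<gamma> p r d \<pi> = (\<Sum>s0\<in>UNIV. d s0 * perf_from \<gamma> p r (\<lambda>x. if x = s0 then 1 else 0) \<pi>)"
proof -
  let ?term = "\<lambda>s0 t. \<gamma> ^ t *
      expected_reward p r \<pi> (state_dist p \<pi> (\<lambda>x. if x = s0 then 1 else 0) t)"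
  have "is_distribution (\<lambda>x. if x = s0 then 1 else 0)" for s0 :: 's
    by (simp add: is_distribution_def)
  then have summable: "summable (?term s0)" for s0
    using assms by (intro summable_discounted_expected_reward)
  have "perf_from \<gamma> p r d \<pi> = (\<Sum>t. \<Sum>s0\<in>UNIV. d s0 * ?term s0 t)"
    unfolding perf_from_eq_suminf_expected_reward
    by (subst state_dist_eq_sum_point_masses)
       (simp add: expected_reward_sum expected_reward_scale sum_distrib_left mult_ac)
  also have "\<dots> = (\<Sum>s0\<in>UNIV. \<Sum>t. d s0 * ?term s0 t)"
    using summable by (intro suminf_sum summable_mult)
  also have "\<dots> = (\<Sum>s0\<in>UNIV. d s0 * perf_from \<gamma> p r (\<lambda>x. if x = s0 then 1 else 0) \<pi>)"
    using summable by (simp add: suminf_mult perf_from_eq_suminf_expected_reward)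
  finally show ?thesis .
qed

lemma J_eq_sum_init_V:
  assumes "valid_model m" and "is_policy \<pi>" and "0 \<le> \<gamma>" and "\<gamma> < 1"
  shows "J \<gamma> m \<pi> = (\<Sum>s\<in>UNIV. init_of m s * V \<gamma> m \<pi> s)"
  using assms unfolding J_def V_def valid_model_iff_distributions
  by (intro perf_from_eq_sum_point_masses) auto

lemma J_mono_V:
  assumes "valid_model m" and "is_policy \<pi>" and "is_policy \<pi>'" and "0 \<le> \<gamma>" and "\<gamma> < 1"
    and "\<And>s. V \<gamma> m \<pi> s \<le> V \<gamma> m \<pi>' s"
  shows "J \<gamma> m \<pi> \<le> J \<gamma> m \<pi>'"
proof -
  have "\<And>s. 0 \<le> init_of m s"
    using assms(1) by (simp add: valid_model_def)
  then show ?thesis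
    using assms by (simp add: J_eq_sum_init_V sum_mono mult_left_mono)
qed

theorem proposition2:
  fixes \<gamma> :: real
    and mstar m :: "('s::finite, 'a::finite) model"
    and \<pi>b \<pi>r \<pi>ce :: "('s, 'a) policy"
  assumes "0 \<le> \<gamma>" and "\<gamma> < 1"
    and "valid_model mstar" and "valid_model m"
    and "is_policy \<pi>b"
    and "is_rollout_policy \<gamma> m \<pi>b \<pi>r"
    and "is_ce_policy \<gamma> m \<pi>ce"
    and "is_PRM \<gamma> m mstar {\<pi>r, \<pi>ce}"
  shows "J \<gamma> mstar \<pi>ce \<ge> J \<gamma> mstar \<pi>r"
proof -
  have "is_policy \<pi>r"
    using assms(6) by (simp add: is_rollout_policy_def)
  with assms(7) have "is_policy \<pi>ce" and "\<And>s. V \<gamma> m \<pi>r s \<le> V \<gamma> m \<pi>ce s"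
    by (auto simp: is_ce_policy_def)
  with \<open>is_policy \<pi>r\<close> assms(1,2,4) have "J \<gamma> m \<pi>r \<le> J \<gamma> m \<pi>ce"
    by (intro J_mono_V)
  with assms(8) show ?thesis
    by (simp add: is_PRM_def)
qed

end
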